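(* Let $A\in\mathfrak{so}(q_1)^p$ and $B\in\mathfrak{so}(q_2)^p$ each have linearly independent components. Suppose each of them is a distinguished point for $SL(q_i,\mathbb R)\times SL(p,\mathbb R)$ (with $q_1$, $q_2$ respectively) and is $SL(p,\mathbb R)$-minimal. Then there exists $c>0$ such that the concatenation $C=A+_c(cB)\in\mathfrak{so}(q_1+q_2)^p$ is a distinguished point for $SL(q_1+q_2,\mathbb R)\times SL(p,\mathbb R)$ and is $SL(p,\mathbb R)$-minimal. Consequently $\mathbb R^{p+q_1+q_2}(C)$ with its standard inner product is a nilsoliton.
   Context: $\mathfrak{so}(q)$ denotes the real skew-symmetric $q\times q$ matrices, with inner product $\langle X,Y\rangle=\mathrm{tr}(XY^T)$. The group $GL(q,\mathbb R)\times GL(p,\mathbb R)$ acts on $\mathfrak{so}(q)^p$ by $(g,h)\cdot(C_1,\dots,C_p)=(C'_1,\dots,C'_p)$ with $C'_k=\sum_i h_{ki}\,gC_ig^T$. The Lie algebra action of $(X,Y)$ is $\big((X,Y)\cdot C\big)_k=XC_k+C_kX^T+\sum_iY_{ki}C_i$. Moment maps: $m_1(C)=-2\sum_iC_i^2$ and $m_2(C)=[\mathrm{tr}(C_iC_j^T)]_{ij}$. Their traceless parts $m_1^0$, $m_2^0$ are the $SL$ moment maps. $C$ is distinguished for $SL(q)\times SL(p)$ if $(m_1^0(C),m_2^0(C))\cdot C=rC$ for some $r\in\mathbb R$. $C$ is $SL(p)$-minimal if $m_2^0(C)=0$. Concatenation: for $A\in\mathfrak{so}(q_1)^p$ and $B\in\mathfrak{so}(q_2)^p$,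 $A+_cB\in\mathfrak{so}(q_1+q_2)^p$ has $k$-th component the block-diagonal matrix $\mathrm{diag}(A_k,B_k)$. For $C\in\mathfrak{so}(q)^p$ with linearly independent components, $\mathbb R^{p+q}(C)$ is the two-step nilpotent Lie algebra on $\mathbb R^{q+p}$ with $[e_i,e_j]=\sum_k(C_k)_{ij}e_{q+k}$ for $i,j\le q$ and all other brackets of basis vectors zero. Its standard inner product makes $\{e_i\}$ orthonormal. A nilsoliton is an inner product whose Ricci operator equals $\lambda\mathrm{Id}+D$ for some $\lambda\in\mathbb R$ and some symmetric derivation $D$. *)

theory Defs
  imports Main "HOL-Analysis.Analysis"
begin

text \<open>Matrices are functions nat => nat => real; an n x n matrix is one that
vanishes outside indices below n. A p-tuple of matrices is a function
nat => (matrix), with components indexed by k < p.\<close>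

type_synonym mat = "nat \<Rightarrow> nat \<Rightarrow> real"
type_synonym mtuple = "nat \<Rightarrow> mat"

definition so :: "nat \<Rightarrow> mat set" where
  "so q = {M. (\<forall>i j. M i j = - M j i) \<and> (\<forall>i j. \<not>(i < q \<and> j < q) \<longrightarrow> M i j = 0)}"

definition in_so_pow :: "nat \<Rightarrow> nat \<Rightarrow> mtuple \<Rightarrow> bool" where
  "in_so_pow q p C \<longleftrightarrow> (\<forall>k<p. C k \<in> so q) \<and> (\<forall>k. p \<le> k \<longrightarrow> C k = (\<lambda>i j. 0))"

definition lin_indep_comps :: "nat \<Rightarrow> mtuple \<Rightarrow> bool" where
  "lin_indep_comps p C \<longleftrightarrow>
     (\<forall>a :: nat \<Rightarrow> real. (\<forall>i j. (\<Sum>k<p. a k * C k i j) = 0) \<longrightarrow> (\<forall>k<p. a k = 0))"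

definition mmul :: "nat \<Rightarrow> mat \<Rightarrow> mat \<Rightarrow> mat" where
  "mmul n X Y = (\<lambda>i j. \<Sum>l<n. X i l * Y l j)"

definition mtrans :: "mat \<Rightarrow> mat" where
  "mtrans X = (\<lambda>i j. X j i)"

definition mtrace :: "nat \<Rightarrow> mat \<Rightarrow> real" where
  "mtrace n X = (\<Sum>i<n. X i i)"

definition ident :: "nat \<Rightarrow> mat" where
  "ident n = (\<lambda>i j. if i = j \<and> i < n then 1 else 0)"

definition m1 :: "nat \<Rightarrow> nat \<Rightarrow> mtuple \<Rightarrow> mat" where
  "m1 q p C = (\<lambda>a b. -2 * (\<Sum>i<p. mmul q (C i) (C i) a b))"

definition m2 :: "nat \<Rightarrow> nat \<Rightarrow> mtuple \<Rightarrow> mat" where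
  "m2 q p C = (\<lambda>i j. if i < p \<and> j < p then mtrace q (mmul q (C i) (mtrans (C j))) else 0)"

text \<open>Traceless parts (the SL moment maps).\<close>

definition traceless :: "nat \<Rightarrow> mat \<Rightarrow> mat" where
  "traceless n X = (\<lambda>i j. X i j - (mtrace n X / real n) * ident n i j)"

definition m1_0 :: "nat \<Rightarrow> nat \<Rightarrow> mtuple \<Rightarrow> mat" where
  "m1_0 q p C = traceless q (m1 q p C)"

definition m2_0 :: "nat \<Rightarrow> nat \<Rightarrow> mtuple \<Rightarrow> mat" where
  "m2_0 q p C = traceless p (m2 q p C)"

definition lie_act :: "nat \<Rightarrow> nat \<Rightarrow> mat \<Rightarrow> mat \<Rightarrow> mtuple \<Rightarrow> mtuple" where
  "lie_act q p X Y C = (\<lambda>k a b.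
      mmul q X (C k) a b + mmul q (C k) (mtrans X) a b + (\<Sum>i<p. Y k i * C i a b))"

definition distinguished :: "nat \<Rightarrow> nat \<Rightarrow> mtuple \<Rightarrow> bool" where
  "distinguished q p C \<longleftrightarrow>
     (\<exists>r::real. \<forall>k<p. \<forall>a<q. \<forall>b<q.
        lie_act q p (m1_0 q p C) (m2_0 q p C) C k a b = r * C k a b)"

definition SLp_minimal :: "nat \<Rightarrow> nat \<Rightarrow> mtuple \<Rightarrow> bool" where
  "SLp_minimal q p C \<longleftrightarrow> (\<forall>i<p. \<forall>j<p. m2_0 q p C i j = 0)"

definition concat_so :: "nat \<Rightarrow> mtuple \<Rightarrow> mtuple \<Rightarrow> mtuple" where
  "concat_so q1 A B = (\<lambda>k i j.
      if i < q1 \<and> j < q1 then A k i j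
      else if q1 \<le> i \<and> q1 \<le> j then B k (i - q1) (j - q1) else 0)"

definition scale_tuple :: "real \<Rightarrow> mtuple \<Rightarrow> mtuple" where
  "scale_tuple c B = (\<lambda>k i j. c * B k i j)"

text \<open>A Lie algebra on R^n with orthonormal basis e_0..e_{n-1} is given by structure
constants sc i j m = <[e_i,e_j], e_m>.  The two-step nilpotent algebra R^{p+q}(C):
[e_i,e_j] = sum_k (C_k)_ij e_{q+k} for i,j<q, all other brackets of basis vectors zero.\<close>

definition nil_sc :: "nat \<Rightarrow> nat \<Rightarrow> mtuple \<Rightarrow> nat \<Rightarrow> nat \<Rightarrow> nat \<Rightarrow> real" where
  "nil_sc q p C i j m =
     (if i < q \<and> j < q \<and> q \<le> m \<and> m < q + p then C (m - q) i j else 0)"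

text \<open>Ricci operator (matrix w.r.t. the orthonormal basis) of a nilpotent metric Lie algebra:
  <Ric X,Y> = -1/2 sum_{i,j} <[X,e_i],e_j><[Y,e_i],e_j> + 1/4 sum_{i,j} <[e_i,e_j],X><[e_i,e_j],Y>.\<close>

definition ricci_nil :: "nat \<Rightarrow> (nat \<Rightarrow> nat \<Rightarrow> nat \<Rightarrow> real) \<Rightarrow> mat" where
  "ricci_nil n sc = (\<lambda>a b.
      - (1/2) * (\<Sum>i<n. \<Sum>j<n. sc a i j * sc b i j)
      + (1/4) * (\<Sum>i<n. \<Sum>j<n. sc i j a * sc i j b))"

text \<open>D (matrix, D e_i = sum_a D a i e_a) is a derivation:
  D[e_i,e_j] = [D e_i, e_j] + [e_i, D e_j].\<close>

definition is_derivation :: "nat \<Rightarrow> (nat \<Rightarrow> nat \<Rightarrow> nat \<Rightarrow> real) \<Rightarrow> mat \<Rightarrow> bool" where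
  "is_derivation n sc D \<longleftrightarrow>
     (\<forall>i<n. \<forall>j<n. \<forall>t<n.
        (\<Sum>m<n. sc i j m * D t m) =
        (\<Sum>a<n. D a i * sc a j t) + (\<Sum>a<n. D a j * sc i a t))"

definition is_nilsoliton :: "nat \<Rightarrow> (nat \<Rightarrow> nat \<Rightarrow> nat \<Rightarrow> real) \<Rightarrow> bool" where
  "is_nilsoliton n sc \<longleftrightarrow>
     (\<exists>(lam::real) D. is_derivation n sc D \<and> (\<forall>a<n. \<forall>b<n. D a b = D b a) \<and>
        (\<forall>a<n. \<forall>b<n. ricci_nil n sc a b = lam * ident n a b + D a b))"

end

theory Submission
  imports Defs
begin

(* For an SL(p)-minimal tuple C we have m2_0(C) = 0, and m1_0(C) differs from m1(C) by a
   multiple of the identity, which acts on C by a scalar.  Hence such a C is distinguished iff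
   it is an "m1-eigenvector": (m1(C), 0) . C = rho C for some rho; SL(p)-minimality itself
   says that m2(C) is a multiple of the identity.  Both properties survive concatenation:
   m1(A +_c B) = diag(m1(A), m1(B)) and m2(A +_c B) = m2(A) + m2(B), while scaling B by c
   multiplies m1(B), m2(B) by c^2 and the eigenvalue by c^2.  The eigenvalue of a nonzero
   tuple is positive, since rho |C|^2 = |m1(C)|^2, so c = sqrt(rho_A / rho_B) makes the two
   eigenvalues agree.  Finally the Ricci operator of R^(q+p)(C) is diag(-m1(C)/4, m2(C)/4);
   for an m1-eigenvector with scalar m2 it equals lambda Id + D with D a block-diagonal
   derivation. *)

lemma sum_lessThan_add:
  fixes f :: "nat \<Rightarrow> real"
  shows "(\<Sum>l<q1 + q2. f l) = (\<Sum>l<q1. f l) + (\<Sum>l<q2. f (q1 + l))"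
  by (induction q2) auto

lemma sum_ident_right: "b < n \<Longrightarrow> (\<Sum>l<n. f l * ident n b l) = f b"
  by (simp add: ident_def if_distrib cong: if_cong)

lemma sum_ident_left: "a < n \<Longrightarrow> (\<Sum>l<n. ident n a l * f l) = f a"
  using sum_ident_right[of a n f] by (simp add: ident_def mult.commute eq_commute)

definition blockdiag :: "nat \<Rightarrow> mat \<Rightarrow> mat \<Rightarrow> mat" where
  "blockdiag q X Y = (\<lambda>i j.
      if i < q \<and> j < q then X i j
      else if q \<le> i \<and> q \<le> j then Y (i - q) (j - q) else 0)"

lemma concat_so_blockdiag: "concat_so q A B k = blockdiag q (A k) (B k)"
  by (simp add: concat_so_def blockdiag_def)

lemma mmul_blockdiag:
  "mmul (q1 + q2) (blockdiag q1 X1 Y1) (blockdiag q1 X2 Y2) =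
     blockdiag q1 (mmul q1 X1 X2) (mmul q2 Y1 Y2)"
  by (auto simp: fun_eq_iff mmul_def blockdiag_def sum_lessThan_add)

lemma mtrans_blockdiag: "mtrans (blockdiag q X Y) = blockdiag q (mtrans X) (mtrans Y)"
  by (auto simp: fun_eq_iff mtrans_def blockdiag_def)

lemma mtrace_blockdiag: "mtrace (q1 + q2) (blockdiag q1 X Y) = mtrace q1 X + mtrace q2 Y"
  by (simp add: mtrace_def blockdiag_def sum_lessThan_add)

lemma ident_blockdiag: "ident (q + p) = blockdiag q (ident q) (ident p)"
  by (auto simp: fun_eq_iff ident_def blockdiag_def)

lemma blockdiag_sym:
  assumes "\<And>i j. X i j = X j i" and "\<And>i j. Y i j = Y j i"
  shows "blockdiag q X Y a b = blockdiag q X Y b a"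
  unfolding blockdiag_def using assms(1)[of a b] assms(2)[of "a - q" "b - q"] by auto

lemma in_so_pow_skew: "in_so_pow q p C \<Longrightarrow> k < p \<Longrightarrow> C k i j = - C k j i"
  unfolding in_so_pow_def so_def by blast

lemma in_so_pow_scale:
  assumes "in_so_pow q p C"
  shows "in_so_pow q p (scale_tuple c C)"
  unfolding in_so_pow_def so_def
proof (intro conjI allI impI CollectI)
  fix k i j assume "k < p"
  then have "C k i j = - C k j i" and "\<not> (i < q \<and> j < q) \<Longrightarrow> C k i j = 0"
    using assms unfolding in_so_pow_def so_def by blast+
  then show "scale_tuple c C k i j = - scale_tuple c C k j i"
    and "\<not> (i < q \<and> j < q) \<Longrightarrow> scale_tuple c C k i j = 0"
    unfolding scale_tuple_def by auto
next
  fix k assume "p \<le> k"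
  then show "scale_tuple c C k = (\<lambda>i j. 0)"
    using assms unfolding in_so_pow_def scale_tuple_def by (simp add: fun_eq_iff)
qed

lemma in_so_pow_concat:
  assumes "in_so_pow q1 p A" and "in_so_pow q2 p B"
  shows "in_so_pow (q1 + q2) p (concat_so q1 A B)"
  unfolding in_so_pow_def so_def
proof (intro conjI allI impI CollectI)
  fix k i j assume "k < p"
  then have "A k i j = - A k j i" "B k (i - q1) (j - q1) = - B k (j - q1) (i - q1)"
    and "\<And>i j. \<not> (i < q1 \<and> j < q1) \<Longrightarrow> A k i j = 0"
    and "\<And>i j. \<not> (i < q2 \<and> j < q2) \<Longrightarrow> B k i j = 0"
    using assms unfolding in_so_pow_def so_def by blast+
  then show "concat_so q1 A B k i j = - concat_so q1 A B k j i"
    and "\<not> (i < q1 + q2 \<and> j < q1 + q2) \<Longrightarrow> concat_so q1 A B k i j = 0"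
    unfolding concat_so_def by auto
next
  fix k assume "p \<le> k"
  then show "concat_so q1 A B k = (\<lambda>i j. 0)"
    using assms unfolding in_so_pow_def concat_so_def by (simp add: fun_eq_iff)
qed

lemma lie_act_cong_Y:
  assumes "\<And>i. i < p \<Longrightarrow> Y k i = Y' k i"
  shows "lie_act q p X Y C k = lie_act q p X Y' C k"
  using assms by (simp add: lie_act_def)

lemma lie_act_scalar_shift:
  assumes "k < p" and "a < q" and "b < q"
  shows "lie_act q p (\<lambda>i j. \<alpha> * X i j + \<beta> * ident q i j) (\<lambda>l i. \<alpha> * Y l i + \<gamma> * ident p l i) C k a b =
         \<alpha> * lie_act q p X Y C k a b + (2 * \<beta> + \<gamma>) * C k a b"
proof -
  have left: "mmul q (\<lambda>i j. \<alpha> * X i j + \<beta> * ident q i j) (C k) a b = \<alpha> * mmul q X (C k) a b + \<beta> * C k a b"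
    using sum_ident_left[OF \<open>a < q\<close>, of "\<lambda>l. C k l b"]
    by (simp add: mmul_def distrib_right sum.distrib sum_distrib_left[symmetric] mult.assoc)
  have right: "mmul q (C k) (mtrans (\<lambda>i j. \<alpha> * X i j + \<beta> * ident q i j)) a b =
      \<alpha> * mmul q (C k) (mtrans X) a b + \<beta> * C k a b"
    using sum_ident_right[OF \<open>b < q\<close>, of "\<lambda>l. C k a l"]
    by (simp add: mmul_def mtrans_def distrib_left sum.distrib sum_distrib_left[symmetric] mult.left_commute)
  have tuple: "(\<Sum>i<p. (\<alpha> * Y k i + \<gamma> * ident p k i) * C i a b) = \<alpha> * (\<Sum>i<p. Y k i * C i a b) + \<gamma> * C k a b"
    using sum_ident_left[OF \<open>k < p\<close>, of "\<lambda>i. C i a b"]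
    by (simp add: distrib_right sum.distrib sum_distrib_left[symmetric] mult.assoc)
  show ?thesis
    unfolding lie_act_def left right tuple by (simp add: algebra_simps)
qed

definition m1_eigen :: "nat \<Rightarrow> nat \<Rightarrow> mtuple \<Rightarrow> real \<Rightarrow> bool" where
  "m1_eigen q p C \<rho> \<longleftrightarrow>
     (\<forall>k<p. \<forall>a<q. \<forall>b<q. lie_act q p (m1 q p C) (\<lambda>_ _. 0) C k a b = \<rho> * C k a b)"

(* For an SL(p)-minimal tuple, being distinguished means being an m1-eigenvector: the
   traceless parts differ from m1, m2 by multiples of the identity, and m2_0 vanishes. *)
lemma distinguished_iff_m1_eigen:
  assumes "SLp_minimal q p C"
  shows "distinguished q p C \<longleftrightarrow> (\<exists>\<rho>. m1_eigen q p C \<rho>)"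
proof -
  define t where "t = mtrace q (m1 q p C) / real q"
  have shift: "lie_act q p (m1_0 q p C) (m2_0 q p C) C k a b =
      lie_act q p (m1 q p C) (\<lambda>_ _. 0) C k a b - 2 * t * C k a b"
    if kab: "k < p" "a < q" "b < q" for k a b
  proof -
    have "m1_0 q p C = (\<lambda>i j. 1 * m1 q p C i j + (- t) * ident q i j)"
      by (simp add: fun_eq_iff m1_0_def traceless_def t_def)
    moreover have "lie_act q p X (m2_0 q p C) C k = lie_act q p X (\<lambda>l i. 1 * 0 + 0 * ident p l i) C k" for X
      using assms \<open>k < p\<close> unfolding SLp_minimal_def by (intro lie_act_cong_Y) simp
    ultimately show ?thesis
      using lie_act_scalar_shift[OF kab, where \<alpha> = 1 and X = "m1 q p C" and \<beta> = "- t"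
          and Y = "\<lambda>_ _. 0" and \<gamma> = 0 and C = C]
      by simp
  qed
  show ?thesis
  proof
    assume "distinguished q p C"
    then obtain r where r: "\<forall>k<p. \<forall>a<q. \<forall>b<q.
        lie_act q p (m1_0 q p C) (m2_0 q p C) C k a b = r * C k a b"
      unfolding distinguished_def by blast
    have "m1_eigen q p C (r + 2 * t)"
      unfolding m1_eigen_def
    proof (intro allI impI)
      fix k a b assume kab: "k < p" "a < q" "b < q"
      show "lie_act q p (m1 q p C) (\<lambda>_ _. 0) C k a b = (r + 2 * t) * C k a b"
        using shift[OF kab] r kab by (simp add: distrib_right)
    qed
    then show "\<exists>\<rho>. m1_eigen q p C \<rho>" ..
  next
    assume "\<exists>\<rho>. m1_eigen q p C \<rho>"
    then obtain \<rho> where eigen: "m1_eigen q p C \<rho>" ..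
    have "\<forall>k<p. \<forall>a<q. \<forall>b<q.
        lie_act q p (m1_0 q p C) (m2_0 q p C) C k a b = (\<rho> - 2 * t) * C k a b"
    proof (intro allI impI)
      fix k a b assume kab: "k < p" "a < q" "b < q"
      show "lie_act q p (m1_0 q p C) (m2_0 q p C) C k a b = (\<rho> - 2 * t) * C k a b"
        using shift[OF kab] eigen kab unfolding m1_eigen_def by (simp add: left_diff_distrib)
    qed
    then show "distinguished q p C" unfolding distinguished_def by blast
  qed
qed

lemma SLp_minimal_iff:
  "SLp_minimal q p C \<longleftrightarrow> (\<exists>s. \<forall>i<p. \<forall>j<p. m2 q p C i j = s * ident p i j)"
proof
  assume "SLp_minimal q p C"
  then show "\<exists>s. \<forall>i<p. \<forall>j<p. m2 q p C i j = s * ident p i j"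
    unfolding SLp_minimal_def m2_0_def traceless_def
    by (intro exI[of _ "mtrace p (m2 q p C) / real p"]) auto
next
  assume "\<exists>s. \<forall>i<p. \<forall>j<p. m2 q p C i j = s * ident p i j"
  then obtain s where s: "\<forall>i<p. \<forall>j<p. m2 q p C i j = s * ident p i j" ..
  have "mtrace p (m2 q p C) = (\<Sum>i<p. s)"
    unfolding mtrace_def by (rule sum.cong) (auto simp: s ident_def)
  then have trace: "mtrace p (m2 q p C) / real p = s" if "0 < p"
    using that by simp
  show "SLp_minimal q p C"
    unfolding SLp_minimal_def m2_0_def traceless_def
  proof (intro allI impI)
    fix i j assume "i < p" "j < p"
    then show "m2 q p C i j - mtrace p (m2 q p C) / real p * ident p i j = 0"
      using s trace by simp
  qed
qed

lemma m1_scale: "m1 q p (scale_tuple c C) = (\<lambda>a b. c\<^sup>2 * m1 q p C a b)"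
  by (simp add: fun_eq_iff m1_def mmul_def scale_tuple_def sum_distrib_left power2_eq_square mult_ac)

lemma m2_scale: "m2 q p (scale_tuple c C) = (\<lambda>i j. c\<^sup>2 * m2 q p C i j)"
  by (simp add: fun_eq_iff m2_def mtrace_def mmul_def mtrans_def scale_tuple_def sum_distrib_left
      power2_eq_square mult_ac)

lemma m1_eigen_scale:
  assumes "m1_eigen q p C \<rho>"
  shows "m1_eigen q p (scale_tuple c C) (c\<^sup>2 * \<rho>)"
  unfolding m1_eigen_def
proof (intro allI impI)
  fix k a b assume kab: "k < p" "a < q" "b < q"
  have "lie_act q p (m1 q p (scale_tuple c C)) (\<lambda>_ _. 0) (scale_tuple c C) k a b =
      c ^ 3 * lie_act q p (m1 q p C) (\<lambda>_ _. 0) C k a b"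
    unfolding m1_scale by (simp add: lie_act_def mmul_def mtrans_def scale_tuple_def sum_distrib_left
        power2_eq_square power3_eq_cube distrib_left mult_ac)
  also have "\<dots> = c\<^sup>2 * \<rho> * scale_tuple c C k a b"
    using assms kab unfolding m1_eigen_def scale_tuple_def by (simp add: power2_eq_square power3_eq_cube)
  finally show "lie_act q p (m1 q p (scale_tuple c C)) (\<lambda>_ _. 0) (scale_tuple c C) k a b =
      c\<^sup>2 * \<rho> * scale_tuple c C k a b" .
qed

lemma m1_concat: "m1 (q1 + q2) p (concat_so q1 A B) = blockdiag q1 (m1 q1 p A) (m1 q2 p B)"
  by (simp add: fun_eq_iff m1_def concat_so_blockdiag mmul_blockdiag) (auto simp: blockdiag_def)

lemma m2_concat: "m2 (q1 + q2) p (concat_so q1 A B) i j = m2 q1 p A i j + m2 q2 p B i j"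
  by (simp add: m2_def concat_so_blockdiag mtrans_blockdiag mmul_blockdiag mtrace_blockdiag)

lemma lie_act_concat:
  "lie_act (q1 + q2) p (blockdiag q1 X1 X2) (\<lambda>_ _. 0) (concat_so q1 A B) k =
     blockdiag q1 (lie_act q1 p X1 (\<lambda>_ _. 0) A k) (lie_act q2 p X2 (\<lambda>_ _. 0) B k)"
  by (simp add: fun_eq_iff lie_act_def concat_so_blockdiag mtrans_blockdiag mmul_blockdiag)
    (simp add: blockdiag_def)

lemma m1_eigen_concat:
  assumes "m1_eigen q1 p A \<rho>" and "m1_eigen q2 p B \<rho>"
  shows "m1_eigen (q1 + q2) p (concat_so q1 A B) \<rho>"
  unfolding m1_eigen_def m1_concat lie_act_concat
proof (intro allI impI)
  fix k a b assume kab: "k < p" "a < q1 + q2" "b < q1 + q2"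
  then show "blockdiag q1 (lie_act q1 p (m1 q1 p A) (\<lambda>_ _. 0) A k)
      (lie_act q2 p (m1 q2 p B) (\<lambda>_ _. 0) B k) a b = \<rho> * concat_so q1 A B k a b"
    using assms unfolding m1_eigen_def concat_so_blockdiag blockdiag_def by auto
qed

lemma lin_indep_nonzero_comp:
  assumes "in_so_pow q p A" and "lin_indep_comps p A" and "k < p"
  obtains i j where "i < q" and "j < q" and "A k i j \<noteq> 0"
proof -
  have "\<exists>i<q. \<exists>j<q. A k i j \<noteq> 0"
  proof (rule ccontr)
    assume "\<not> (\<exists>i<q. \<exists>j<q. A k i j \<noteq> 0)"
    then have "A k i j = 0" for i j
      using assms(1,3) unfolding in_so_pow_def so_def by blast
    then have "(\<Sum>l<p. (if l = k then 1 else 0) * A l i j) = 0" for i j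
      by (auto intro!: sum.neutral)
    then have "(if k = k then 1 else 0 :: real) = 0"
      using assms(2)[unfolded lin_indep_comps_def, rule_format, of "\<lambda>l. if l = k then 1 else 0"]
        assms(3) by blast
    then show False by simp
  qed
  then show thesis using that by blast
qed

lemma m1_skew_gram:
  assumes "in_so_pow q p A"
  shows "m1 q p A a l = 2 * (\<Sum>k<p. \<Sum>b<q. A k a b * A k l b)"
proof -
  have "A k b l = - A k l b" if "k < p" for k b
    using in_so_pow_skew[OF assms that] .
  then have "(\<Sum>k<p. \<Sum>b<q. A k a b * A k b l) = - (\<Sum>k<p. \<Sum>b<q. A k a b * A k l b)"
    by (simp add: sum_negf[symmetric])
  then show ?thesis
    unfolding m1_def mmul_def by simp
qed

lemma m1_skew_gram_columns:
  assumes "in_so_pow q p A"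
  shows "m1 q p A b l = 2 * (\<Sum>k<p. \<Sum>a<q. A k a b * A k a l)"
proof -
  have "A k b a * A k l a = A k a b * A k a l" if "k < p" for k a
    using in_so_pow_skew[OF assms that, of b a] in_so_pow_skew[OF assms that, of l a] by simp
  then show ?thesis
    unfolding m1_skew_gram[OF assms] by (intro arg_cong[where f = "(*) 2"] sum.cong refl) simp
qed

lemma sum_swap_inner:
  fixes F :: "nat \<Rightarrow> nat \<Rightarrow> nat \<Rightarrow> nat \<Rightarrow> real"
  shows "(\<Sum>k<p. \<Sum>a<q. \<Sum>b<q. \<Sum>l<q. F k a b l) = (\<Sum>a<q. \<Sum>l<q. \<Sum>k<p. \<Sum>b<q. F k a b l)"
proof -
  have "(\<Sum>k<p. \<Sum>a<q. \<Sum>b<q. \<Sum>l<q. F k a b l) = (\<Sum>a<q. \<Sum>k<p. \<Sum>b<q. \<Sum>l<q. F k a b l)"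
    by (rule sum.swap)
  also have "\<dots> = (\<Sum>a<q. \<Sum>k<p. \<Sum>l<q. \<Sum>b<q. F k a b l)"
    by (intro sum.cong refl sum.swap)
  also have "\<dots> = (\<Sum>a<q. \<Sum>l<q. \<Sum>k<p. \<Sum>b<q. F k a b l)"
    by (intro sum.cong refl sum.swap)
  finally show ?thesis .
qed

(* The key identity <(m1(C), 0) . C, C> = |m1(C)|^2: each of the two terms of the action
   contributes <m1(C), sum_k C_k C_k^T> = |m1(C)|^2 / 2. *)
lemma m1_pairing:
  assumes "in_so_pow q p A"
  shows "(\<Sum>k<p. \<Sum>a<q. \<Sum>b<q. A k a b * lie_act q p (m1 q p A) (\<lambda>_ _. 0) A k a b) =
         (\<Sum>a<q. \<Sum>l<q. (m1 q p A a l)\<^sup>2)"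
proof -
  define M where "M = m1 q p A"
  have left: "(\<Sum>k<p. \<Sum>a<q. \<Sum>b<q. A k a b * mmul q M (A k) a b) = (\<Sum>a<q. \<Sum>l<q. (M a l)\<^sup>2) / 2"
  proof -
    have "(\<Sum>k<p. \<Sum>a<q. \<Sum>b<q. A k a b * mmul q M (A k) a b)
        = (\<Sum>a<q. \<Sum>l<q. \<Sum>k<p. \<Sum>b<q. M a l * (A k a b * A k l b))"
      unfolding mmul_def sum_swap_inner[symmetric] by (simp add: sum_distrib_left mult_ac)
    also have "\<dots> = (\<Sum>a<q. \<Sum>l<q. M a l * (M a l / 2))"
      unfolding M_def m1_skew_gram[OF assms] by (simp add: sum_distrib_left[symmetric])
    finally show ?thesis by (simp add: sum_divide_distrib power2_eq_square)
  qed
  have right: "(\<Sum>k<p. \<Sum>a<q. \<Sum>b<q. A k a b * mmul q (A k) (mtrans M) a b) = (\<Sum>a<q. \<Sum>l<q. (M a l)\<^sup>2) / 2"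
  proof -
    have "(\<Sum>k<p. \<Sum>a<q. \<Sum>b<q. A k a b * mmul q (A k) (mtrans M) a b)
        = (\<Sum>k<p. \<Sum>b<q. \<Sum>a<q. \<Sum>l<q. M b l * (A k a b * A k a l))"
      unfolding mmul_def mtrans_def by (subst sum.swap) (simp add: sum_distrib_left mult_ac)
    also have "\<dots> = (\<Sum>b<q. \<Sum>l<q. M b l * (M b l / 2))"
      unfolding sum_swap_inner M_def m1_skew_gram_columns[OF assms] by (simp add: sum_distrib_left[symmetric])
    finally show ?thesis by (simp add: sum_divide_distrib power2_eq_square)
  qed
  show ?thesis
    using left right unfolding lie_act_def M_def by (simp add: distrib_left sum.distrib)
qed

(* Hence the m1-eigenvalue of a nonzero tuple is positive: rho |C|^2 = |m1(C)|^2 > 0. *)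
lemma m1_eigen_pos:
  assumes so: "in_so_pow q p A" and li: "lin_indep_comps p A" and "0 < p"
    and eigen: "m1_eigen q p A \<rho>"
  shows "0 < \<rho>"
proof -
  obtain i j where ij: "i < q" "j < q" "A 0 i j \<noteq> 0"
    using lin_indep_nonzero_comp[OF so li \<open>0 < p\<close>] by blast
  have nonneg: "0 \<le> (\<Sum>b<q. (A k a b)\<^sup>2)" for k a
    by (intro sum_nonneg) simp
  have pos_row: "0 < (\<Sum>b<q. (A 0 i b)\<^sup>2)"
    by (rule sum_pos2[where i = j]) (use ij in auto)
  have comp_pos: "0 < (\<Sum>a<q. \<Sum>b<q. (A 0 a b)\<^sup>2)"
    by (rule sum_pos2[where i = i]) (use ij pos_row nonneg in auto)
  have norm_pos: "0 < (\<Sum>k<p. \<Sum>a<q. \<Sum>b<q. (A k a b)\<^sup>2)"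
    by (rule sum_pos2[where i = 0]) (use \<open>0 < p\<close> comp_pos nonneg in \<open>auto intro!: sum_nonneg\<close>)
  have "0 < (\<Sum>k<p. \<Sum>b<q. A k i b * A k i b)"
    by (rule sum_pos2[where i = 0]) (use \<open>0 < p\<close> pos_row in \<open>auto simp: power2_eq_square intro!: sum_nonneg\<close>)
  then have diag_pos: "0 < m1 q p A i i"
    unfolding m1_skew_gram[OF so] by simp
  have m1_pos: "0 < (\<Sum>a<q. \<Sum>l<q. (m1 q p A a l)\<^sup>2)"
    by (rule sum_pos2[where i = i]) (use ij diag_pos in \<open>auto intro!: sum_nonneg sum_pos2[where i = i]\<close>)
  have "\<rho> * (\<Sum>k<p. \<Sum>a<q. \<Sum>b<q. (A k a b)\<^sup>2) =
      (\<Sum>k<p. \<Sum>a<q. \<Sum>b<q. A k a b * lie_act q p (m1 q p A) (\<lambda>_ _. 0) A k a b)"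
    using eigen unfolding m1_eigen_def by (simp add: sum_distrib_left power2_eq_square mult_ac)
  also have "\<dots> = (\<Sum>a<q. \<Sum>l<q. (m1 q p A a l)\<^sup>2)"
    by (rule m1_pairing[OF so])
  finally show ?thesis
    using norm_pos m1_pos by (metis zero_less_mult_pos2)
qed

(* A distinguished, SL(p)-minimal tuple with linearly independent components is an
   m1-eigenvector with positive eigenvalue (for p = 0 the eigenvector condition is vacuous). *)
lemma positive_m1_eigenvalue:
  assumes "in_so_pow q p C" and "lin_indep_comps p C"
    and "distinguished q p C" and "SLp_minimal q p C"
  obtains \<rho> where "m1_eigen q p C \<rho>" and "0 < \<rho>"
proof (cases "p = 0")
  case True
  then show thesis using that[of 1] by (simp add: m1_eigen_def)
next
  case False
  obtain \<rho> where "m1_eigen q p C \<rho>"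
    using distinguished_iff_m1_eigen assms(3,4) by blast
  with False show thesis
    using that m1_eigen_pos assms(1,2) by blast
qed

lemma m1_sym: "in_so_pow q p C \<Longrightarrow> m1 q p C a b = m1 q p C b a"
  by (simp add: m1_skew_gram mult.commute)

lemma ricci_nil_blocks:
  assumes so: "in_so_pow q p C" and "a < q + p" and "b < q + p"
  shows "ricci_nil (q + p) (nil_sc q p C) a b =
         blockdiag q (\<lambda>i j. - (1/4) * m1 q p C i j) (\<lambda>k l. (1/4) * m2 q p C k l) a b"
proof (cases "a < q \<and> b < q")
  case True
  then have "ricci_nil (q + p) (nil_sc q p C) a b = - (1/2) * (\<Sum>i<q. \<Sum>k<p. C k a i * C k b i)"
    by (simp add: ricci_nil_def nil_sc_def sum_lessThan_add)
  also have "\<dots> = - (1/4) * m1 q p C a b"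
    unfolding m1_skew_gram[OF so] by (subst sum.swap) simp
  finally show ?thesis using True by (simp add: blockdiag_def)
next
  case upper: False
  show ?thesis
  proof (cases "q \<le> a \<and> q \<le> b")
    case True
    then obtain k l where kl: "a = q + k" "b = q + l" "k < p" "l < p"
      using assms(2,3) by (metis add_less_cancel_left le_add_diff_inverse)
    then show ?thesis
      by (simp add: ricci_nil_def nil_sc_def blockdiag_def sum_lessThan_add m2_def mtrace_def
          mmul_def mtrans_def)
  next
    case False
    with upper show ?thesis
      by (auto simp: ricci_nil_def nil_sc_def blockdiag_def)
  qed
qed

(* D = diag(X, Y) is a derivation of R^(q+p)(C) as soon as (X^T, -Y) annihilates C, i.e.
   X^T C_l + C_l X = sum_k Y_lk C_k: this is the derivation identity on [e_i, e_j]. *)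
lemma blockdiag_derivation:
  assumes "\<forall>l<p. \<forall>i<q. \<forall>j<q. lie_act q p (mtrans X) (\<lambda>k i. - Y k i) C l i j = 0"
  shows "is_derivation (q + p) (nil_sc q p C) (blockdiag q X Y)"
  unfolding is_derivation_def
proof (intro allI impI)
  fix i j t assume ijt: "i < q + p" "j < q + p" "t < q + p"
  show "(\<Sum>m<q + p. nil_sc q p C i j m * blockdiag q X Y t m) =
      (\<Sum>a<q + p. blockdiag q X Y a i * nil_sc q p C a j t) +
      (\<Sum>a<q + p. blockdiag q X Y a j * nil_sc q p C i a t)"
  proof (cases "q \<le> t \<and> i < q \<and> j < q")
    case True
    then obtain l where l: "t = q + l" "l < p"
      using ijt(3) by (metis add_less_cancel_left le_add_diff_inverse)
    have "(\<Sum>m<q + p. nil_sc q p C i j m * blockdiag q X Y t m) = (\<Sum>k<p. Y l k * C k i j)"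
      using True l by (simp add: sum_lessThan_add nil_sc_def blockdiag_def mult.commute)
    also have "\<dots> = mmul q (mtrans X) (C l) i j + mmul q (C l) (mtrans (mtrans X)) i j"
      using assms True l by (simp add: lie_act_def sum_negf)
    also have "\<dots> = (\<Sum>a<q + p. blockdiag q X Y a i * nil_sc q p C a j t) +
        (\<Sum>a<q + p. blockdiag q X Y a j * nil_sc q p C i a t)"
      using True l by (simp add: sum_lessThan_add nil_sc_def blockdiag_def mmul_def mtrans_def mult.commute)
    finally show ?thesis .
  next
    case False
    then show ?thesis
      by (auto simp: nil_sc_def blockdiag_def intro!: sum.neutral)
  qed
qed

theorem nilsoliton_of_m1_eigen:
  assumes so: "in_so_pow q p C" and eigen: "m1_eigen q p C \<rho>"
    and m2_scalar: "\<forall>i<p. \<forall>j<p. m2 q p C i j = s * ident p i j"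
  shows "is_nilsoliton (q + p) (nil_sc q p C)"
proof -
  define lam where "lam = - (\<rho> + s) / 4"
  define X where "X = (\<lambda>i j. - (1/4) * m1 q p C i j + (- lam) * ident q i j)"
  define Y where "Y = (\<lambda>k l. (s/4 - lam) * ident p k l)"
  have X_sym: "X i j = X j i" for i j
    unfolding X_def using m1_sym[OF so] by (simp add: ident_def)
  have Y_sym: "Y k l = Y l k" for k l
    unfolding Y_def by (simp add: ident_def)
  have "lie_act q p (mtrans X) (\<lambda>k i. - Y k i) C l i j = 0" if "l < p" "i < q" "j < q" for l i j
  proof -
    have "mtrans X = X" using X_sym by (simp add: fun_eq_iff mtrans_def)
    moreover have "(\<lambda>k i. - Y k i) = (\<lambda>k i. - (1/4) * 0 + (lam - s/4) * ident p k i)"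
      by (simp add: fun_eq_iff Y_def algebra_simps)
    ultimately have "lie_act q p (mtrans X) (\<lambda>k i. - Y k i) C l i j =
        - (1/4) * lie_act q p (m1 q p C) (\<lambda>_ _. 0) C l i j + (- lam - s/4) * C l i j"
      using lie_act_scalar_shift[OF that, where \<alpha> = "- (1/4)" and X = "m1 q p C" and \<beta> = "- lam"
          and Y = "\<lambda>_ _. 0" and \<gamma> = "lam - s/4" and C = C]
      unfolding X_def by simp
    moreover have "lie_act q p (m1 q p C) (\<lambda>_ _. 0) C l i j = \<rho> * C l i j"
      using eigen that unfolding m1_eigen_def by blast
    ultimately show ?thesis
      unfolding lam_def by (simp add: field_simps)
  qed
  then have "is_derivation (q + p) (nil_sc q p C) (blockdiag q X Y)"
    by (intro blockdiag_derivation) blast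
  moreover have "\<forall>a<q + p. \<forall>b<q + p. blockdiag q X Y a b = blockdiag q X Y b a"
    using blockdiag_sym[of X Y] X_sym Y_sym by blast
  moreover have "\<forall>a<q + p. \<forall>b<q + p.
      ricci_nil (q + p) (nil_sc q p C) a b = lam * ident (q + p) a b + blockdiag q X Y a b"
  proof (intro allI impI)
    fix a b assume ab: "a < q + p" "b < q + p"
    then show "ricci_nil (q + p) (nil_sc q p C) a b = lam * ident (q + p) a b + blockdiag q X Y a b"
      using m2_scalar unfolding ricci_nil_blocks[OF so ab] ident_blockdiag
      by (auto simp: blockdiag_def X_def Y_def ring_distribs)
  qed
  ultimately show ?thesis
    unfolding is_nilsoliton_def by blast
qed

(* Choosing c = sqrt(rho_A / rho_B) equalizes the eigenvalues; the concatenation is then an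
   m1-eigenvector with scalar m2, hence distinguished, SL(p)-minimal and a nilsoliton. *)
theorem mainTheorem2:
  fixes p q1 q2 :: nat and A B :: mtuple
  assumes "in_so_pow q1 p A" and "in_so_pow q2 p B"
    and "lin_indep_comps p A" and "lin_indep_comps p B"
    and "distinguished q1 p A" and "distinguished q2 p B"
    and "SLp_minimal q1 p A" and "SLp_minimal q2 p B"
  shows "\<exists>c::real. c > 0 \<and>
           distinguished (q1 + q2) p (concat_so q1 A (scale_tuple c B)) \<and>
           SLp_minimal (q1 + q2) p (concat_so q1 A (scale_tuple c B)) \<and>
           is_nilsoliton (q1 + q2 + p) (nil_sc (q1 + q2) p (concat_so q1 A (scale_tuple c B)))"
proof -
  obtain \<rho>A where eigA: "m1_eigen q1 p A \<rho>A" and "0 < \<rho>A"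
    using positive_m1_eigenvalue assms(1,3,5,7) by blast
  obtain \<rho>B where eigB: "m1_eigen q2 p B \<rho>B" and "0 < \<rho>B"
    using positive_m1_eigenvalue assms(2,4,6,8) by blast
  define c where "c = sqrt (\<rho>A / \<rho>B)"
  have "0 < c" and c_sq: "c\<^sup>2 * \<rho>B = \<rho>A"
    using \<open>0 < \<rho>A\<close> \<open>0 < \<rho>B\<close> by (simp_all add: c_def)
  define C where "C = concat_so q1 A (scale_tuple c B)"
  have so: "in_so_pow (q1 + q2) p C"
    unfolding C_def using assms(1,2) by (intro in_so_pow_concat in_so_pow_scale)
  have "m1_eigen q2 p (scale_tuple c B) \<rho>A"
    using m1_eigen_scale[OF eigB, of c] c_sq by simp
  then have eigC: "m1_eigen (q1 + q2) p C \<rho>A"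
    unfolding C_def by (rule m1_eigen_concat[OF eigA])
  obtain sA where "\<forall>i<p. \<forall>j<p. m2 q1 p A i j = sA * ident p i j"
    using assms(7) unfolding SLp_minimal_iff ..
  moreover obtain sB where "\<forall>i<p. \<forall>j<p. m2 q2 p B i j = sB * ident p i j"
    using assms(8) unfolding SLp_minimal_iff ..
  ultimately have m2C: "\<forall>i<p. \<forall>j<p. m2 (q1 + q2) p C i j = (sA + c\<^sup>2 * sB) * ident p i j"
    unfolding C_def m2_concat m2_scale by (simp add: algebra_simps)
  then have minC: "SLp_minimal (q1 + q2) p C"
    unfolding SLp_minimal_iff ..
  show ?thesis
    using \<open>0 < c\<close> minC distinguished_iff_m1_eigen[OF minC] eigC
      nilsoliton_of_m1_eigen[OF so eigC m2C] unfolding C_def by blast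
qed

end
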